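(* Let $\Omega_1\subsetneq\Omega_2\subset\mathbb{C}$ and $Y\subsetneq\mathbb{C}$ be domains. Then $\mathscr{C}_{\Omega_2}^{Y,s}(w)\leq \mathscr{C}_{\Omega_1}^{Y,s}(w)$ for all $w\in\Omega_1$ and $s\in Y$.
   Context: $\mathbb{D}=\{z\in\mathbb{C}:|z|<1\}$. For domains $\Omega\subset\mathbb{C}$, $Y\subsetneq\mathbb{C}$, and points $w\in\Omega$, $s\in Y$, let $\mathcal{H}^s_w(\Omega,Y)$ be the set of holomorphic maps $h:\Omega\to Y$ with $h(w)=s$ and $h(z)\neq s$ for all $z\in\Omega\setminus\{w\}$. For a domain $Y\subsetneq\mathbb{C}$ and $v\in Y$, the Hurwitz density is $\eta_Y(v)=2/r_Y(v)$, where $r_Y(v)=\max\{h'(0): h:\mathbb{D}\to Y \text{ holomorphic},\ h(0)=v,\ h(z)\neq v \text{ for } z\in\mathbb{D}\setminus\{0\},\ h'(0)>0\}$. The Carathéodory density of the Hurwitz metric of $\Omega$ relative to $Y$ is $\mathscr{C}_{\Omega}^{Y,s}(w)=\sup\{\eta_Y(h(w))|h'(w)| : h\in\mathcal{H}^s_w(\Omega,Y)\}$, defined to be $0$ if $\mathcal{H}^s_w(\Omega,Y)=\emptyset$. *)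

theory Defs
  imports "HOL-Complex_Analysis.Complex_Analysis"
begin

definition domain :: "complex set \<Rightarrow> bool" where
  "domain S \<longleftrightarrow> open S \<and> connected S \<and> S \<noteq> {}"

definition hurwitz_maps :: "complex set \<Rightarrow> complex set \<Rightarrow> complex \<Rightarrow> complex \<Rightarrow> (complex \<Rightarrow> complex) set" where
  "hurwitz_maps \<Omega> Y w s =
     {h. h holomorphic_on \<Omega> \<and> h ` \<Omega> \<subseteq> Y \<and> h w = s \<and> (\<forall>z\<in>\<Omega> - {w}. h z \<noteq> s)}"

text \<open>r_Y(v) = max { h'(0) : h in H^v_0(D, Y), h'(0) > 0 } (taken as a supremum).\<close>
definition hurwitz_radius :: "complex set \<Rightarrow> complex \<Rightarrow> real" where
  "hurwitz_radius Y v =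
     Sup {Re (deriv h 0) | h. h \<in> hurwitz_maps (ball 0 1) Y 0 v \<and>
                              deriv h 0 \<in> \<real> \<and> Re (deriv h 0) > 0}"

definition hurwitz_density :: "complex set \<Rightarrow> complex \<Rightarrow> real" where
  "hurwitz_density Y v = 2 / hurwitz_radius Y v"

definition cara_hurwitz :: "complex set \<Rightarrow> complex set \<Rightarrow> complex \<Rightarrow> complex \<Rightarrow> real" where
  "cara_hurwitz \<Omega> Y s w =
     (if hurwitz_maps \<Omega> Y w s = {} then 0
      else Sup {hurwitz_density Y (h w) * cmod (deriv h w) | h. h \<in> hurwitz_maps \<Omega> Y w s})"

end

theory Submission
  imports Defs
begin

(* Shrinking the domain enlarges the set of admissible maps, so the inequality is monotonicity
   of a supremum under inclusion; what has to be shown is that the suprema are taken over bounded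
   sets (Sup of an unbounded set of reals is junk) and that the Hurwitz density is positive.
   Boundedness comes from Landau's theorem: for h with h(w) = s taking the value s only at w and
   omitting some a outside Y, write (h - a)/(s - a) = exp M on a disc with M(w) = 0. Then M omits
   2 pi i and -2 pi i, so (M + 2 pi i)/(4 pi i) omits 0 and 1 and equals 1/2 at w, which bounds
   M'(w) and hence h'(w) = (s - a) M'(w) uniformly. *)

lemma Landau_deriv_bound_ball:
  assumes "0 < \<delta>"
  obtains B where "\<And>f. \<lbrakk>f holomorphic_on ball w \<delta>; \<And>z. z \<in> ball w \<delta> \<Longrightarrow> f z \<noteq> 0 \<and> f z \<noteq> 1;
                       f w = c\<rbrakk> \<Longrightarrow> norm (deriv f w) \<le> B"
proof -
  obtain R where R: "\<And>z. 0 < R z"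
    and Landau: "\<And>f. \<lbrakk>f holomorphic_on cball 0 (R (f 0));
                      \<And>z. norm z \<le> R (f 0) \<Longrightarrow> f z \<noteq> 0 \<and> f z \<noteq> 1\<rbrakk> \<Longrightarrow> norm (deriv f 0) < 1"
    using Landau_Picard by metis
  define \<rho> where "\<rho> = \<delta> / (2 * R c)"
  have "0 < \<rho>"
    using R assms by (simp add: \<rho>_def)
  define \<phi> where "\<phi> z = w + of_real \<rho> * z" for z
  have \<phi>_cball: "\<phi> ` cball 0 (R c) \<subseteq> ball w \<delta>"
  proof
    fix y assume "y \<in> \<phi> ` cball 0 (R c)"
    then obtain z where z: "norm z \<le> R c" "y = \<phi> z" by auto
    have "norm (of_real \<rho> * z) \<le> \<rho> * R c"
      using z \<open>0 < \<rho>\<close> by (simp add: norm_mult mult_left_mono)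
    also have "\<dots> < \<delta>"
      using R assms by (simp add: \<rho>_def)
    finally show "y \<in> ball w \<delta>"
      using z by (simp add: \<phi>_def dist_norm)
  qed
  have "norm (deriv f w) \<le> 1 / \<rho>"
    if f: "f holomorphic_on ball w \<delta>" "\<And>z. z \<in> ball w \<delta> \<Longrightarrow> f z \<noteq> 0 \<and> f z \<noteq> 1" "f w = c"
    for f
  proof -
    have "\<phi> holomorphic_on cball 0 (R c)"
      unfolding \<phi>_def by (intro holomorphic_intros)
    then have "(f \<circ> \<phi>) holomorphic_on cball 0 (R c)"
      using holomorphic_on_compose_gen f(1) \<phi>_cball by blast
    moreover have "(f \<circ> \<phi>) 0 = c"
      using f(3) by (simp add: \<phi>_def)
    moreover have "(f \<circ> \<phi>) z \<noteq> 0 \<and> (f \<circ> \<phi>) z \<noteq> 1" if "norm z \<le> R c" for z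
      using f(2) \<phi>_cball that by (metis comp_apply image_subset_iff mem_cball_0)
    ultimately have "norm (deriv (f \<circ> \<phi>) 0) < 1"
      using Landau[of "f \<circ> \<phi>"] by simp
    moreover have "deriv (f \<circ> \<phi>) 0 = deriv f w * of_real \<rho>"
    proof (rule DERIV_imp_deriv, rule DERIV_chain)
      show "(f has_field_derivative deriv f w) (at (\<phi> 0))"
        using f(1) assms by (simp add: \<phi>_def holomorphic_derivI)
      show "(\<phi> has_field_derivative of_real \<rho>) (at 0)"
        unfolding \<phi>_def by (auto intro!: derivative_eq_intros)
    qed
    ultimately show ?thesis
      using \<open>0 < \<rho>\<close> by (simp add: norm_mult field_simps)
  qed
  then show ?thesis
    using that by blast
qed

lemma holomorphic_exp_representation:
  assumes "convex A" "open A" "h holomorphic_on A" "\<And>z. z \<in> A \<Longrightarrow> h z \<noteq> a"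
    and "w \<in> A" "h w = s"
  obtains M where "M holomorphic_on A" "M w = 0"
    "\<And>z. z \<in> A \<Longrightarrow> h z = a + (s - a) * exp (M z)"
    "deriv h w = (s - a) * deriv M w"
proof -
  have sa: "s - a \<noteq> 0"
    using assms(4-6) by force
  have "(\<lambda>z. (h z - a) / (s - a)) holomorphic_on A"
    using assms(3) sa by (intro holomorphic_intros)
  then obtain L where L: "L holomorphic_on A" "\<And>z. z \<in> A \<Longrightarrow> exp (L z) = (h z - a) / (s - a)"
    using holomorphic_logarithm_exists[of A "\<lambda>z. (h z - a) / (s - a)" w] assms sa by auto
  define M where "M z = L z - L w" for z
  have M: "M holomorphic_on A"
    unfolding M_def using L(1) by (intro holomorphic_intros)
  have "exp (L w) = 1"
    using L(2)[OF assms(5)] assms(6) sa by simp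
  then have h_eq: "h z = a + (s - a) * exp (M z)" if "z \<in> A" for z
    using L(2)[OF that] sa by (simp add: M_def exp_diff)
  have "M w = 0"
    by (simp add: M_def)
  have "deriv h w = deriv (\<lambda>z. a + (s - a) * exp (M z)) w"
  proof (rule complex_derivative_transform_within_open)
    show "(\<lambda>z. a + (s - a) * exp (M z)) holomorphic_on A"
      using M by (intro holomorphic_intros)
  qed (use assms h_eq in blast)+
  also have "\<dots> = (s - a) * deriv M w"
  proof (rule DERIV_imp_deriv)
    have "(M has_field_derivative deriv M w) (at w)"
      using M assms by (simp add: holomorphic_derivI)
    then show "((\<lambda>z. a + (s - a) * exp (M z)) has_field_derivative (s - a) * deriv M w) (at w)"
      using \<open>M w = 0\<close> by (auto intro!: derivative_eq_intros)
  qed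
  finally show ?thesis
    using that M h_eq \<open>M w = 0\<close> by blast
qed

lemma deriv_bound_omitting_value_attained_once:
  assumes "0 < \<delta>" "s \<noteq> a"
  obtains B where "\<And>h. \<lbrakk>h holomorphic_on ball w \<delta>; \<And>z. z \<in> ball w \<delta> \<Longrightarrow> h z \<noteq> a; h w = s;
                       \<And>z. z \<in> ball w \<delta> - {w} \<Longrightarrow> h z \<noteq> s\<rbrakk> \<Longrightarrow> norm (deriv h w) \<le> B"
proof -
  obtain B where B: "\<And>f. \<lbrakk>f holomorphic_on ball w \<delta>; \<And>z. z \<in> ball w \<delta> \<Longrightarrow> f z \<noteq> 0 \<and> f z \<noteq> 1;
                            f w = 1/2\<rbrakk> \<Longrightarrow> norm (deriv f w) \<le> B"
    using Landau_deriv_bound_ball[OF assms(1)] by metis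
  have "norm (deriv h w) \<le> norm (s - a) * (4 * pi * B)"
    if h: "h holomorphic_on ball w \<delta>" "\<And>z. z \<in> ball w \<delta> \<Longrightarrow> h z \<noteq> a" "h w = s"
      "\<And>z. z \<in> ball w \<delta> - {w} \<Longrightarrow> h z \<noteq> s"
    for h
  proof -
    obtain M where M: "M holomorphic_on ball w \<delta>" "M w = 0"
      "\<And>z. z \<in> ball w \<delta> \<Longrightarrow> h z = a + (s - a) * exp (M z)" "deriv h w = (s - a) * deriv M w"
      using holomorphic_exp_representation[of "ball w \<delta>" h a w s] h assms by auto
    have M_omits: "M z \<noteq> 2 * of_real pi * \<i> \<and> M z \<noteq> - (2 * of_real pi * \<i>)" if z: "z \<in> ball w \<delta>" for z
    proof -
      have "M z = 0" if "exp (M z) = 1"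
      proof -
        have "h z = s"
          using M(3)[OF z] that by simp
        then show ?thesis
          using h(4) z M(2) by blast
      qed
      then show ?thesis
        by (auto simp: exp_minus)
    qed
    define F where "F z = (M z + 2 * of_real pi * \<i>) / (4 * of_real pi * \<i>)" for z
    have "F holomorphic_on ball w \<delta>"
      unfolding F_def using M(1) by (intro holomorphic_intros) auto
    moreover have "F z \<noteq> 0 \<and> F z \<noteq> 1" if "z \<in> ball w \<delta>" for z
      using M_omits[OF that] by (auto simp: F_def add_eq_0_iff divide_eq_1_iff algebra_simps)
    moreover have "F w = 1/2"
      by (simp add: F_def M(2))
    ultimately have "norm (deriv F w) \<le> B"
      by (rule B)
    moreover have "deriv F w = deriv M w / (4 * of_real pi * \<i>)"
    proof (rule DERIV_imp_deriv)
      have "(M has_field_derivative deriv M w) (at w)"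
        using M(1) assms by (simp add: holomorphic_derivI)
      then show "(F has_field_derivative deriv M w / (4 * of_real pi * \<i>)) (at w)"
        unfolding F_def by (auto intro!: derivative_eq_intros)
    qed
    ultimately have "norm (deriv M w) \<le> 4 * pi * B"
      by (simp add: norm_divide norm_mult field_simps)
    then show ?thesis
      using M(4) by (simp add: norm_mult mult_left_mono)
  qed
  then show ?thesis
    using that by blast
qed

lemma bdd_above_hurwitz_maps_deriv:
  assumes "open \<Omega>" "w \<in> \<Omega>" "Y \<noteq> UNIV" "s \<in> Y"
  shows "bdd_above ((\<lambda>h. norm (deriv h w)) ` hurwitz_maps \<Omega> Y w s)"
proof -
  obtain a where a: "a \<notin> Y"
    using assms(3) by blast
  obtain \<delta> where \<delta>: "0 < \<delta>" "ball w \<delta> \<subseteq> \<Omega>"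
    using assms(1,2) open_contains_ball by blast
  obtain B where B: "\<And>h. \<lbrakk>h holomorphic_on ball w \<delta>; \<And>z. z \<in> ball w \<delta> \<Longrightarrow> h z \<noteq> a; h w = s;
                          \<And>z. z \<in> ball w \<delta> - {w} \<Longrightarrow> h z \<noteq> s\<rbrakk> \<Longrightarrow> norm (deriv h w) \<le> B"
    using deriv_bound_omitting_value_attained_once[OF \<delta>(1), of s a w] a assms(4) by metis
  have "norm (deriv h w) \<le> B" if "h \<in> hurwitz_maps \<Omega> Y w s" for h
    using that \<delta>(2) a unfolding hurwitz_maps_def by (intro B) (blast intro: holomorphic_on_subset)+
  then show ?thesis
    by (rule bdd_aboveI2)
qed

lemma hurwitz_radius_pos:
  assumes "open Y" "Y \<noteq> UNIV" "v \<in> Y"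
  shows "0 < hurwitz_radius Y v"
proof -
  let ?S = "{Re (deriv h 0) | h. h \<in> hurwitz_maps (ball 0 1) Y 0 v \<and>
                                deriv h 0 \<in> \<real> \<and> Re (deriv h 0) > 0}"
  obtain B where B: "\<And>h. h \<in> hurwitz_maps (ball 0 1) Y 0 v \<Longrightarrow> norm (deriv h 0) \<le> B"
    using bdd_above_hurwitz_maps_deriv[of "ball 0 1" 0 Y v] assms by (auto simp: bdd_above_def)
  have "bdd_above ?S"
    using B by (force intro: bdd_aboveI order_trans[OF complex_Re_le_cmod])
  obtain \<epsilon> where \<epsilon>: "0 < \<epsilon>" "ball v \<epsilon> \<subseteq> Y"
    using assms open_contains_ball by blast
  define g where "g z = v + of_real \<epsilon> * z" for z
  have "deriv g 0 = of_real \<epsilon>"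
    unfolding g_def by (rule DERIV_imp_deriv) (auto intro!: derivative_eq_intros)
  moreover have "g \<in> hurwitz_maps (ball 0 1) Y 0 v"
  proof -
    have "g z \<in> ball v \<epsilon>" if "norm z < 1" for z
      using that \<epsilon>(1) by (simp add: g_def dist_norm norm_mult)
    then have "g ` ball 0 1 \<subseteq> Y"
      using \<epsilon>(2) by auto
    moreover have "g holomorphic_on ball 0 1"
      unfolding g_def by (intro holomorphic_intros)
    ultimately show ?thesis
      using \<epsilon>(1) by (simp add: hurwitz_maps_def g_def)
  qed
  ultimately have "\<epsilon> \<in> ?S"
    using \<epsilon>(1) by force
  then have "\<epsilon> \<le> hurwitz_radius Y v"
    unfolding hurwitz_radius_def using \<open>bdd_above ?S\<close> by (rule cSup_upper)
  then show ?thesis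
    using \<epsilon>(1) by simp
qed

lemma hurwitz_density_pos:
  assumes "open Y" "Y \<noteq> UNIV" "v \<in> Y"
  shows "0 < hurwitz_density Y v"
  using hurwitz_radius_pos[OF assms] by (simp add: hurwitz_density_def)

lemma hurwitz_maps_antimono:
  assumes "\<Omega>1 \<subseteq> \<Omega>2"
  shows "hurwitz_maps \<Omega>2 Y w s \<subseteq> hurwitz_maps \<Omega>1 Y w s"
  using assms holomorphic_on_subset unfolding hurwitz_maps_def by blast

lemma cara_hurwitz_eq_SUP:
  assumes "hurwitz_maps \<Omega> Y w s \<noteq> {}"
  shows "cara_hurwitz \<Omega> Y s w =
           (SUP h\<in>hurwitz_maps \<Omega> Y w s. hurwitz_density Y s * norm (deriv h w))"
proof -
  have "{hurwitz_density Y (h w) * norm (deriv h w) | h. h \<in> hurwitz_maps \<Omega> Y w s} =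
          (\<lambda>h. hurwitz_density Y s * norm (deriv h w)) ` hurwitz_maps \<Omega> Y w s"
    unfolding hurwitz_maps_def by auto
  then show ?thesis
    using assms by (simp add: cara_hurwitz_def)
qed

lemma bdd_above_hurwitz_density_deriv:
  assumes "open \<Omega>" "w \<in> \<Omega>" "open Y" "Y \<noteq> UNIV" "s \<in> Y"
  shows "bdd_above ((\<lambda>h. hurwitz_density Y s * norm (deriv h w)) ` hurwitz_maps \<Omega> Y w s)"
proof -
  obtain B where "\<And>h. h \<in> hurwitz_maps \<Omega> Y w s \<Longrightarrow> norm (deriv h w) \<le> B"
    using bdd_above_hurwitz_maps_deriv[of \<Omega> w Y s] assms by (auto simp: bdd_above_def)
  then show ?thesis
    using hurwitz_density_pos[OF assms(3-5)]
    by (intro bdd_aboveI2[where M = "hurwitz_density Y s * B"]) (simp add: mult_left_mono)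
qed

lemma cara_hurwitz_nonneg:
  assumes "open \<Omega>" "w \<in> \<Omega>" "open Y" "Y \<noteq> UNIV" "s \<in> Y"
  shows "0 \<le> cara_hurwitz \<Omega> Y s w"
proof (cases "hurwitz_maps \<Omega> Y w s = {}")
  case False
  then obtain h where "h \<in> hurwitz_maps \<Omega> Y w s"
    by blast
  then show ?thesis
    using False bdd_above_hurwitz_density_deriv[OF assms] hurwitz_density_pos[OF assms(3-5)]
    by (simp add: cara_hurwitz_eq_SUP cSUP_upper2)
qed (simp add: cara_hurwitz_def)

lemma cara_hurwitz_antimono:
  assumes "open \<Omega>1" "\<Omega>1 \<subseteq> \<Omega>2" "w \<in> \<Omega>1" "open Y" "Y \<noteq> UNIV" "s \<in> Y"
  shows "cara_hurwitz \<Omega>2 Y s w \<le> cara_hurwitz \<Omega>1 Y s w"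
proof (cases "hurwitz_maps \<Omega>2 Y w s = {}")
  case True
  then show ?thesis
    using cara_hurwitz_nonneg[OF assms(1,3-6)] by (simp add: cara_hurwitz_def)
next
  case False
  have sub: "hurwitz_maps \<Omega>2 Y w s \<subseteq> hurwitz_maps \<Omega>1 Y w s"
    using assms(2) by (rule hurwitz_maps_antimono)
  with False have "hurwitz_maps \<Omega>1 Y w s \<noteq> {}"
    by blast
  then show ?thesis
    using False sub bdd_above_hurwitz_density_deriv[OF assms(1,3-6)]
    by (simp add: cara_hurwitz_eq_SUP cSUP_subset_mono)
qed

theorem corollary3p13:
  fixes \<Omega>1 \<Omega>2 Y :: "complex set" and w s :: complex
  assumes "domain \<Omega>1" and "domain \<Omega>2" and "\<Omega>1 \<subset> \<Omega>2"
    and "domain Y" and "Y \<noteq> UNIV"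
    and "w \<in> \<Omega>1" and "s \<in> Y"
  shows "cara_hurwitz \<Omega>2 Y s w \<le> cara_hurwitz \<Omega>1 Y s w"
  using assms by (intro cara_hurwitz_antimono) (auto simp: domain_def)

end
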